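(* Let $\mathrm{cost}(n)=\ell(n)/\pi(n)$ for nodes $n$ (with value $+\infty$ when $\pi(n)=0$), and for a state $s$ let $\mathrm{cost}(s)=\min\{\mathrm{cost}(n): T(n)=s\}$. Then LevinTS run with policy $\pi$ expands states in best-first order and at their lowest cost first: (i) for any two states $s_1,s_2$ with $\mathrm{cost}(s_1)<\mathrm{cost}(s_2)$, if LevinTS selects a node $n$ with $T(n)=s_2$, then it has previously selected a node $n'$ with $T(n')=s_1$; (ii) for every state $s$, the first node $n$ with $T(n)=s$ selected by LevinTS satisfies $\mathrm{cost}(n)=\mathrm{cost}(s)$.
   Context: Setting: a finite action set $\mathcal{A}$, a set of states $\mathcal{S}$ with initial state $s_0$, a deterministic transition function $T:\mathcal{S}\times\mathcal{A}\to\mathcal{S}$, and a set of goal states $\mathcal{G}\subseteq\mathcal{S}$. Nodes are finite sequences of actions; the root $n_0$ is the empty sequence; $T(n)$ is the state reached from $s_0$ by applying the actions of $n$ in order; the children of $n$ are $na$, $a\in\mathcal{A}$. For a node $n$ consisting of $t$ actions, $\ell(n):=t+1$ (so $\ell(n_0)=1$). A policy is a function $\pi$ from nodes to $[0,1]$ with $\pi(n_0)=1$ and $\pi(n)=\sum_{a\in\mathcal{A}}\pi(na)$; write $\pi(a\mid n)=\pi(na)/\pi(n)$. The policy is Markovian if $\pi(a\mid n_1)=\pi(a\mid n_2)$ for all actions $a$ and all nodes $n_1,n_2$ with $T(n_1)=T(n_2)$. LevinTS: maintain a frontier $\mathcal{F}$, initially $\{n_0\}$, and a record set $\mathcal{V}$,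 initially $\emptyset$. While $\mathcal{F}\neq\emptyset$: remove from $\mathcal{F}$ a node $n$ minimizing $\ell(n)/\pi(n)$ (this is the node selected/expanded at this iteration); if $T(n)\in\mathcal{G}$, stop with success; if $\pi$ is Markovian, then if there is $n'\in\mathcal{V}$ with $T(n')=T(n)$ and $\pi(n')\ge\pi(n)$, skip to the next iteration (state cut), and otherwise add $n$ to $\mathcal{V}$; finally add all children of $n$ to $\mathcal{F}$. *)

theory Defs
  imports Main "HOL-Library.Extended_Real"
begin

text \<open>Nodes are finite action sequences (lists); the child of n by action a is n @ [a].
  Actions form a finite type 'a; states are the elements of the type 's.\<close>

definition state_of :: "('s \<Rightarrow> 'a \<Rightarrow> 's) \<Rightarrow> 's \<Rightarrow> 'a list \<Rightarrow> 's" where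
  "state_of T s0 n = foldl T s0 n"

definition lev :: "'a list \<Rightarrow> nat" where
  "lev n = length n + 1"

definition is_policy :: "('a::finite list \<Rightarrow> real) \<Rightarrow> bool" where
  "is_policy \<pi> \<longleftrightarrow> (\<forall>n. 0 \<le> \<pi> n \<and> \<pi> n \<le> 1) \<and> \<pi> [] = 1 \<and>
     (\<forall>n. \<pi> n = (\<Sum>a\<in>UNIV. \<pi> (n @ [a])))"

definition cond_pol :: "('a list \<Rightarrow> real) \<Rightarrow> 'a \<Rightarrow> 'a list \<Rightarrow> real" where
  "cond_pol \<pi> a n = \<pi> (n @ [a]) / \<pi> n"

text \<open>Markovian: the conditional probabilities agree for nodes with the same state
  (whenever both conditionals are defined, i.e. both nodes have positive probability).\<close>
definition markovian :: "('s \<Rightarrow> 'a \<Rightarrow> 's) \<Rightarrow> 's \<Rightarrow> ('a list \<Rightarrow> real) \<Rightarrow> bool" where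
  "markovian T s0 \<pi> \<longleftrightarrow> (\<forall>n1 n2 a. state_of T s0 n1 = state_of T s0 n2 \<and> \<pi> n1 > 0 \<and> \<pi> n2 > 0
      \<longrightarrow> cond_pol \<pi> a n1 = cond_pol \<pi> a n2)"

definition node_cost :: "('a list \<Rightarrow> real) \<Rightarrow> 'a list \<Rightarrow> ereal" where
  "node_cost \<pi> n = (if \<pi> n = 0 then \<infinity> else ereal (real (lev n) / \<pi> n))"

text \<open>cost(s) = min over nodes reaching s (Inf; it is attained whenever finite,
  and is \<infinity> for unreachable states).\<close>
definition state_cost :: "('s \<Rightarrow> 'a \<Rightarrow> 's) \<Rightarrow> 's \<Rightarrow> ('a list \<Rightarrow> real) \<Rightarrow> 's \<Rightarrow> ereal" where
  "state_cost T s0 \<pi> s = Inf {node_cost \<pi> n | n. state_of T s0 n = s}"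

definition children :: "'a::finite list \<Rightarrow> 'a list set" where
  "children n = {n @ [a] | a. True}"

text \<open>levin_reach T s0 G \<pi> F V sel: the LevinTS run can be in a configuration with
  frontier F, record set V, having so far selected the nodes sel (in order), without
  having stopped.\<close>
inductive levin_reach :: "('s \<Rightarrow> 'a::finite \<Rightarrow> 's) \<Rightarrow> 's \<Rightarrow> 's set \<Rightarrow> ('a list \<Rightarrow> real)
    \<Rightarrow> 'a list set \<Rightarrow> 'a list set \<Rightarrow> 'a list list \<Rightarrow> bool"
  for T s0 G \<pi> where
  init: "levin_reach T s0 G \<pi> {[]} {} []"
| cut: "\<lbrakk> levin_reach T s0 G \<pi> F V sel; n \<in> F; \<forall>m\<in>F. node_cost \<pi> n \<le> node_cost \<pi> m;
          state_of T s0 n \<notin> G; markovian T s0 \<pi>;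
          \<exists>n'\<in>V. state_of T s0 n' = state_of T s0 n \<and> \<pi> n' \<ge> \<pi> n \<rbrakk>
        \<Longrightarrow> levin_reach T s0 G \<pi> (F - {n}) V (sel @ [n])"
| expand_markov: "\<lbrakk> levin_reach T s0 G \<pi> F V sel; n \<in> F; \<forall>m\<in>F. node_cost \<pi> n \<le> node_cost \<pi> m;
          state_of T s0 n \<notin> G; markovian T s0 \<pi>;
          \<not> (\<exists>n'\<in>V. state_of T s0 n' = state_of T s0 n \<and> \<pi> n' \<ge> \<pi> n) \<rbrakk>
        \<Longrightarrow> levin_reach T s0 G \<pi> ((F - {n}) \<union> children n) (insert n V) (sel @ [n])"
| expand_plain: "\<lbrakk> levin_reach T s0 G \<pi> F V sel; n \<in> F; \<forall>m\<in>F. node_cost \<pi> n \<le> node_cost \<pi> m;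
          state_of T s0 n \<notin> G; \<not> markovian T s0 \<pi> \<rbrakk>
        \<Longrightarrow> levin_reach T s0 G \<pi> ((F - {n}) \<union> children n) V (sel @ [n])"

end

theory Submission
  imports Defs
begin

text \<open>A child costs at least as much as its parent, so every frontier node of LevinTS costs at
  least as much as every node selected so far. Conversely, a node \<open>m\<close> of positive probability
  that is strictly cheaper than the whole frontier is subsumed by a selected node: by induction
  along \<open>m\<close>, its parent is subsumed by an expanded node \<open>z\<close>; the child of \<open>z\<close> by the last
  action of \<open>m\<close> is on the frontier or selected, and for a Markovian policy it reaches the same
  state as \<open>m\<close> with at least the probability and at most the cost of \<open>m\<close>, so it cannot be on
  the frontier. Hence every state cheaper than the node being selected, a cheapest frontier node,
  has already been reached by a selected node, which gives both claims.\<close>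

lemma policy_nonneg: "is_policy \<pi> \<Longrightarrow> 0 \<le> \<pi> n"
  unfolding is_policy_def by blast

lemma policy_sum_children: "is_policy \<pi> \<Longrightarrow> (\<Sum>a\<in>UNIV. \<pi> (n @ [a])) = \<pi> n"
  unfolding is_policy_def by metis

lemma policy_snoc_le:
  assumes "is_policy \<pi>"
  shows "\<pi> (n @ [a]) \<le> \<pi> n"
proof -
  have "\<pi> (n @ [a]) \<le> (\<Sum>b\<in>UNIV. \<pi> (n @ [b]))"
    by (rule member_le_sum) (simp_all add: policy_nonneg[OF assms])
  also have "\<dots> = \<pi> n"
    using assms by (rule policy_sum_children)
  finally show ?thesis .
qed

lemma node_cost_snoc_ge:
  assumes "is_policy \<pi>"
  shows "node_cost \<pi> n \<le> node_cost \<pi> (n @ [a])"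
proof (cases "\<pi> (n @ [a]) = 0")
  case False
  then have pos: "0 < \<pi> (n @ [a])"
    using policy_nonneg[OF assms] by (simp add: order_less_le)
  then have "0 < \<pi> n"
    using policy_snoc_le[OF assms] by (rule order_less_le_trans)
  have "real (lev n) / \<pi> n \<le> real (lev (n @ [a])) / \<pi> (n @ [a])"
    by (rule frac_le) (use pos policy_snoc_le[OF assms] in \<open>auto simp: lev_def\<close>)
  with pos \<open>0 < \<pi> n\<close> show ?thesis
    by (simp add: node_cost_def)
qed (simp add: node_cost_def)

lemma node_cost_less_imp_policy_pos:
  "is_policy \<pi> \<Longrightarrow> node_cost \<pi> n < c \<Longrightarrow> 0 < \<pi> n"
  using policy_nonneg[of \<pi> n] by (auto simp: node_cost_def order_less_le)

lemma state_of_snoc: "state_of T s0 (n @ [a]) = T (state_of T s0 n) a"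
  by (simp add: state_of_def)

lemma state_cost_le_node_cost: "state_cost T s0 \<pi> (state_of T s0 n) \<le> node_cost \<pi> n"
  unfolding state_cost_def by (rule Inf_lower) blast

lemma state_cost_less_iff:
  "state_cost T s0 \<pi> s < c \<longleftrightarrow> (\<exists>n. state_of T s0 n = s \<and> node_cost \<pi> n < c)"
  unfolding state_cost_def Inf_less_iff by blast

text \<open>For a Markovian policy the subtrees below two nodes reaching the same state are scaled
  copies of each other, which makes the second disjunct stable under extension by an action.\<close>
definition subsumes :: "('s \<Rightarrow> 'a \<Rightarrow> 's) \<Rightarrow> 's \<Rightarrow> ('a list \<Rightarrow> real) \<Rightarrow> 'a list \<Rightarrow> 'a list \<Rightarrow> bool"
  where "subsumes T s0 \<pi> x y \<longleftrightarrow> x = y \<or>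
    (markovian T s0 \<pi> \<and> state_of T s0 x = state_of T s0 y \<and> \<pi> y \<le> \<pi> x
      \<and> node_cost \<pi> x \<le> node_cost \<pi> y)"

lemma subsumes_refl [simp]: "subsumes T s0 \<pi> x x"
  by (simp add: subsumes_def)

lemma subsumes_trans:
  "subsumes T s0 \<pi> x y \<Longrightarrow> subsumes T s0 \<pi> y z \<Longrightarrow> subsumes T s0 \<pi> x z"
  unfolding subsumes_def by (auto intro: order_trans)

lemma subsumesD:
  "subsumes T s0 \<pi> x y \<Longrightarrow> state_of T s0 x = state_of T s0 y \<and> node_cost \<pi> x \<le> node_cost \<pi> y"
  by (auto simp: subsumes_def)

lemma subsumes_snoc:
  assumes pol: "is_policy \<pi>" and sub: "subsumes T s0 \<pi> x y" and pos: "0 < \<pi> (y @ [a])"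
  shows "subsumes T s0 \<pi> (x @ [a]) (y @ [a])"
proof (cases "x = y")
  case False
  with sub have markov: "markovian T s0 \<pi>" and state: "state_of T s0 x = state_of T s0 y"
    and prob: "\<pi> y \<le> \<pi> x" and cost: "node_cost \<pi> x \<le> node_cost \<pi> y"
    by (auto simp: subsumes_def)
  have py: "0 < \<pi> y"
    using pos policy_snoc_le[OF pol, of y a] by linarith
  with prob have px: "0 < \<pi> x" by linarith
  define r where "r = \<pi> (y @ [a]) / \<pi> y"
  have r: "0 < r"
    using pos py by (simp add: r_def)
  have "cond_pol \<pi> a x = cond_pol \<pi> a y"
    using markov state px py unfolding markovian_def by blast
  then have child_x: "\<pi> (x @ [a]) = \<pi> x * r" and child_y: "\<pi> (y @ [a]) = \<pi> y * r"
    using px py by (simp_all add: cond_pol_def r_def field_simps)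
  have "real (lev x) / \<pi> x + 1 / \<pi> x \<le> real (lev y) / \<pi> y + 1 / \<pi> y"
    using cost px py prob by (intro add_mono) (simp_all add: node_cost_def frac_le)
  then have "(real (lev x) + 1) / \<pi> x \<le> (real (lev y) + 1) / \<pi> y"
    by (simp add: add_divide_distrib)
  from divide_right_mono[OF this, of r] have "node_cost \<pi> (x @ [a]) \<le> node_cost \<pi> (y @ [a])"
    using px py r by (simp add: node_cost_def child_x child_y lev_def)
  moreover have "\<pi> (y @ [a]) \<le> \<pi> (x @ [a])"
    using prob r by (simp add: child_x child_y)
  ultimately show ?thesis
    using markov state by (simp add: subsumes_def state_of_snoc)
qed simp

text \<open>The nodes whose children have been put on the frontier.\<close>
definition expanded_nodes :: "('s \<Rightarrow> 'a \<Rightarrow> 's) \<Rightarrow> 's \<Rightarrow> ('a list \<Rightarrow> real) \<Rightarrow> 'a list set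
    \<Rightarrow> 'a list list \<Rightarrow> 'a list set"
  where "expanded_nodes T s0 \<pi> V sel = (if markovian T s0 \<pi> then V else set sel)"

lemma levin_reach_selected_le_frontier:
  assumes pol: "is_policy \<pi>"
  shows "levin_reach T s0 G \<pi> F V sel \<Longrightarrow> x \<in> set sel \<Longrightarrow> y \<in> F \<Longrightarrow> node_cost \<pi> x \<le> node_cost \<pi> y"
  by (induction arbitrary: x y rule: levin_reach.induct)
    (auto simp: children_def intro: order_trans[OF _ node_cost_snoc_ge[OF pol]])

lemma levin_reach_root: "levin_reach T s0 G \<pi> F V sel \<Longrightarrow> [] \<in> F \<union> set sel"
  by (induction rule: levin_reach.induct) auto

lemma levin_reach_expanded_subset:
  "levin_reach T s0 G \<pi> F V sel \<Longrightarrow> expanded_nodes T s0 \<pi> V sel \<subseteq> set sel"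
  by (induction rule: levin_reach.induct) (auto simp: expanded_nodes_def split: if_splits)

lemma levin_reach_children_expanded:
  "levin_reach T s0 G \<pi> F V sel \<Longrightarrow> x \<in> expanded_nodes T s0 \<pi> V sel \<Longrightarrow> x @ [a] \<in> F \<union> set sel"
  by (induction arbitrary: x rule: levin_reach.induct)
    (auto simp: expanded_nodes_def children_def split: if_splits)

lemma levin_reach_selected_subsumed:
  assumes pol: "is_policy \<pi>"
  shows "levin_reach T s0 G \<pi> F V sel \<Longrightarrow> x \<in> set sel
    \<Longrightarrow> \<exists>z\<in>expanded_nodes T s0 \<pi> V sel. subsumes T s0 \<pi> z x"
proof (induction arbitrary: x rule: levin_reach.induct)
  case (cut F V sel n x)
  then obtain n' where n': "n' \<in> V" "state_of T s0 n' = state_of T s0 n" "\<pi> n \<le> \<pi> n'"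
    by blast
  have "n' \<in> set sel"
    using levin_reach_expanded_subset[OF cut.hyps(1)] n'(1) cut.hyps(5)
    by (auto simp: expanded_nodes_def)
  then have "subsumes T s0 \<pi> n' n"
    using levin_reach_selected_le_frontier[OF pol cut.hyps(1) _ cut.hyps(2)] n' cut.hyps(5)
    by (simp add: subsumes_def)
  with cut n'(1) show ?case
    by (auto simp: expanded_nodes_def)
qed (auto simp: expanded_nodes_def)

lemma levin_reach_cheap_node_subsumed:
  assumes pol: "is_policy \<pi>" and reach: "levin_reach T s0 G \<pi> F V sel"
  shows "0 < \<pi> m \<Longrightarrow> \<forall>y\<in>F. node_cost \<pi> m < node_cost \<pi> y \<Longrightarrow> \<exists>x\<in>set sel. subsumes T s0 \<pi> x m"
proof (induction m rule: rev_induct)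
  case Nil
  then have "[] \<in> set sel"
    using levin_reach_root[OF reach] by auto
  then show ?case
    by (blast intro: subsumes_refl)
next
  case (snoc a q)
  have "0 < \<pi> q"
    using snoc.prems(1) policy_snoc_le[OF pol, of q a] by linarith
  moreover have "\<forall>y\<in>F. node_cost \<pi> q < node_cost \<pi> y"
    using snoc.prems(2) node_cost_snoc_ge[OF pol, of q a] by (meson order_le_less_trans)
  ultimately obtain x where x: "x \<in> set sel" "subsumes T s0 \<pi> x q"
    using snoc.IH by blast
  then obtain z where z: "z \<in> expanded_nodes T s0 \<pi> V sel" "subsumes T s0 \<pi> z x"
    using levin_reach_selected_subsumed[OF pol reach] by blast
  from z(2) x(2) have "subsumes T s0 \<pi> z q"
    by (rule subsumes_trans)
  with pol have sub: "subsumes T s0 \<pi> (z @ [a]) (q @ [a])"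
    using snoc.prems(1) by (rule subsumes_snoc)
  then have "node_cost \<pi> (z @ [a]) \<le> node_cost \<pi> (q @ [a])"
    by (blast dest: subsumesD)
  then have "z @ [a] \<notin> F"
    using snoc.prems(2) by (meson leD)
  then have "z @ [a] \<in> set sel"
    using levin_reach_children_expanded[OF reach z(1), of a] by blast
  with sub show ?case by blast
qed

lemma levin_reach_cheap_state_selected:
  assumes "is_policy \<pi>" and "levin_reach T s0 G \<pi> F V sel"
    and "\<forall>y\<in>F. c \<le> node_cost \<pi> y" and "state_cost T s0 \<pi> s < c"
  shows "\<exists>x\<in>set sel. state_of T s0 x = s"
proof -
  obtain m where m: "state_of T s0 m = s" "node_cost \<pi> m < c"
    using assms(4) unfolding state_cost_less_iff by blast
  have "\<forall>y\<in>F. node_cost \<pi> m < node_cost \<pi> y"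
    using order_less_le_trans[OF m(2)] assms(3) by blast
  then obtain x where x: "x \<in> set sel" "subsumes T s0 \<pi> x m"
    using levin_reach_cheap_node_subsumed[OF assms(1,2) node_cost_less_imp_policy_pos[OF assms(1) m(2)]]
    by blast
  show ?thesis
    using x(1) subsumesD[OF x(2)] m(1) by auto
qed

theorem theorem2:
  fixes T :: "'s \<Rightarrow> 'a::finite \<Rightarrow> 's" and s0 :: 's and G :: "'s set"
    and \<pi> :: "'a list \<Rightarrow> real"
  assumes "is_policy \<pi>"
    and "levin_reach T s0 G \<pi> F V sel"
    and "n \<in> F" and "\<forall>m\<in>F. node_cost \<pi> n \<le> node_cost \<pi> m"
  shows "(\<forall>s1 s2. state_cost T s0 \<pi> s1 < state_cost T s0 \<pi> s2 \<and> state_of T s0 n = s2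
            \<longrightarrow> (\<exists>n'\<in>set sel. state_of T s0 n' = s1))
       \<and> ((\<forall>m\<in>set sel. state_of T s0 m \<noteq> state_of T s0 n)
            \<longrightarrow> node_cost \<pi> n = state_cost T s0 \<pi> (state_of T s0 n))"
proof (intro conjI allI impI)
  fix s1 s2
  assume "state_cost T s0 \<pi> s1 < state_cost T s0 \<pi> s2 \<and> state_of T s0 n = s2"
  then have "state_cost T s0 \<pi> s1 < state_cost T s0 \<pi> (state_of T s0 n)"
    by simp
  also have "\<dots> \<le> node_cost \<pi> n"
    by (rule state_cost_le_node_cost)
  finally show "\<exists>n'\<in>set sel. state_of T s0 n' = s1"
    by (rule levin_reach_cheap_state_selected[OF assms(1,2,4)])
next
  assume "\<forall>m\<in>set sel. state_of T s0 m \<noteq> state_of T s0 n"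
  then have "\<not> state_cost T s0 \<pi> (state_of T s0 n) < node_cost \<pi> n"
    using levin_reach_cheap_state_selected[OF assms(1,2,4)] by blast
  then show "node_cost \<pi> n = state_cost T s0 \<pi> (state_of T s0 n)"
    using state_cost_le_node_cost[of T s0 \<pi> n] by (metis order_less_le)
qed

end
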